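(* Let $S$ and $A$ be finite-dimensional quantum systems with Hilbert spaces $\mathcal H_S\cong\mathbb C^{d_S}$ and $\mathcal H_A\cong\mathbb C^{d_A}$, and let $H_S=\sum_{k=1}^{d_S}\epsilon_k|\epsilon_k\rangle\langle\epsilon_k|$ with $\epsilon_1<\epsilon_2<\dots<\epsilon_{d_S}$. Fix a real number $r\neq 0$ and the utility function $u(w)=\frac{1}{r}(1-e^{-rw})$. Let $\rho_{SA}$ be a density matrix on $\mathcal H_S\otimes\mathcal H_A$, $\rho_S=\mathrm{Tr}_A\rho_{SA}$, and let $\{|a\rangle\}_{a=1}^{d_A}$ be any orthonormal basis of $\mathcal H_A$ with projectors $\Pi^A_a=|a\rangle\langle a|$. Write the spectral decompositions $e^{-rH_S/2}\rho_S e^{-rH_S/2}=\sum_k u_k|u_k\rangle\langle u_k|$ with $u_1\ge u_2\ge\dots$, and, for each $a$ with $p_a>0$, $e^{-rH_S/2}\rho_{S|a}e^{-rH_S/2}=\sum_k u^a_k|u^a_k\rangle\langle u^a_k|$ with $u^a_1\ge u^a_2\ge\dots$. Set $y_k=e^{r\epsilon_k}/r$ (so $y_k<y_{k+1}$), $\tilde H_S=\sum_k y_k|u_k\rangle\langle u_k|$ and $\tilde\rho_{S|a}=e^{-rH_S/2}\rho_{S|a}e^{-rH_S/2}$. Then $$\mathcal U_{\{\Pi^A_a\}}(\rho_{SA})-\mathcal U(\rho_S)=\sum_{a:\,p_a>0}p_a\,\tilde{\mathcal E}(\tilde\rho_{S|a})\ge 0,$$ where $\tilde{\mathcal E}(\tilde\rho_{S|a})$,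 the ergotropy of the (non-normalized) operator $\tilde\rho_{S|a}$ with respect to $\tilde H_S$, is given explicitly by $$\tilde{\mathcal E}(\tilde\rho_{S|a})=\sum_{k,j}u^a_j\left(|\langle u_k|u^a_j\rangle|^2-\delta_{j,k}\right)y_k .$$
   Context: Conditional states: for an orthonormal basis $\{|a\rangle\}$ of $\mathcal H_A$, $p_a=\mathrm{Tr}[(I^S\otimes\Pi^A_a)\rho_{SA}]$ and, when $p_a>0$, $\rho_{S|a}=\mathrm{Tr}_A[(I^S\otimes\Pi^A_a)\rho_{SA}(I^S\otimes\Pi^A_a)]/p_a$. For a density matrix $\rho$ on $\mathcal H_S$ and a unitary $U$, the expected utility (with respect to the symmetric work quasiprobability) is $$\langle u(w)\rangle_{\rho,U}=\sum_{i,j,k}\mathrm{Re}\big(\langle\epsilon_i|\rho|\epsilon_j\rangle\langle\epsilon_j|U^\dagger|\epsilon_k\rangle\langle\epsilon_k|U|\epsilon_i\rangle\big)\,u\!\left(\tfrac{\epsilon_i+\epsilon_j}{2}-\epsilon_k\right),$$ the optimal expected utility is $\mathcal U(\rho)=\max_{U}\langle u(w)\rangle_{\rho,U}$ (maximum over unitaries on $\mathcal H_S$), and the daemonic expected utility is $\mathcal U_{\{\Pi^A_a\}}(\rho_{SA})=\sum_{a:\,p_a>0}p_a\,\mathcal U(\rho_{S|a})$. The ergotropy of a positive semidefinite operator $X$ with respect to a Hermitian operator $K$ is $\max_V\big(\mathrm{Tr}[KX]-\mathrm{Tr}[KVXV^\dagger]\big)$ over unitaries $V$. *)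

theory Defs
  imports Complex_Main "Jordan_Normal_Form.Matrix"
begin

(* Finite-dimensional quantum mechanics with explicit complex matrices.
   H_S = C^dS, H_A = C^dA, H_S (x) H_A = C^(dS*dA) with the product basis
   vector |i>|b> at index i*dA + b (i < dS, b < dA). *)

definition adj :: "complex mat \<Rightarrow> complex mat" where
  "adj A = mat (dim_col A) (dim_row A) (\<lambda>(i,j). cnj (A $$ (j,i)))"

definition mtrace :: "complex mat \<Rightarrow> complex" where
  "mtrace A = (\<Sum>i<dim_row A. A $$ (i,i))"

definition unitary :: "nat \<Rightarrow> complex mat \<Rightarrow> bool" where
  "unitary n U \<longleftrightarrow> U \<in> carrier_mat n n \<and> adj U * U = 1\<^sub>m n \<and> U * adj U = 1\<^sub>m n"

definition psd :: "nat \<Rightarrow> complex mat \<Rightarrow> bool" where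
  "psd n X \<longleftrightarrow> X \<in> carrier_mat n n \<and> adj X = X \<and>
     (\<forall>v. 0 \<le> Re (\<Sum>i<n. \<Sum>j<n. cnj (v i) * X $$ (i,j) * v j))"

definition density :: "nat \<Rightarrow> complex mat \<Rightarrow> bool" where
  "density n \<rho> \<longleftrightarrow> psd n \<rho> \<and> mtrace \<rho> = 1"

definition diagm :: "nat \<Rightarrow> (nat \<Rightarrow> complex) \<Rightarrow> complex mat" where
  "diagm n f = mat n n (\<lambda>(i,j). if i = j then f i else 0)"

definition ptrace_A :: "nat \<Rightarrow> nat \<Rightarrow> complex mat \<Rightarrow> complex mat" where
  "ptrace_A dS dA X = mat dS dS (\<lambda>(i,j). \<Sum>b<dA. X $$ (i*dA+b, j*dA+b))"

(* I^S (x) Pi^A_a, where |a> is column a of the unitary B *)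
definition proj_A :: "nat \<Rightarrow> nat \<Rightarrow> complex mat \<Rightarrow> nat \<Rightarrow> complex mat" where
  "proj_A dS dA B a = mat (dS*dA) (dS*dA)
     (\<lambda>(p,q). if p div dA = q div dA then B $$ (p mod dA, a) * cnj (B $$ (q mod dA, a)) else 0)"

definition prob_a :: "nat \<Rightarrow> nat \<Rightarrow> complex mat \<Rightarrow> complex mat \<Rightarrow> nat \<Rightarrow> real" where
  "prob_a dS dA B \<rho> a = Re (mtrace (proj_A dS dA B a * \<rho>))"

definition cond_state :: "nat \<Rightarrow> nat \<Rightarrow> complex mat \<Rightarrow> complex mat \<Rightarrow> nat \<Rightarrow> complex mat" where
  "cond_state dS dA B \<rho> a =
     (1 / complex_of_real (prob_a dS dA B \<rho> a)) \<cdot>\<^sub>m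
       ptrace_A dS dA (proj_A dS dA B a * \<rho> * proj_A dS dA B a)"

(* matrix element <eps_i| X |eps_j>, energy eigenbasis = columns of W *)
definition melem :: "complex mat \<Rightarrow> complex mat \<Rightarrow> nat \<Rightarrow> nat \<Rightarrow> complex" where
  "melem W X i j = (adj W * X * W) $$ (i,j)"

(* expected utility w.r.t. the symmetric work quasiprobability *)
definition exp_util ::
  "nat \<Rightarrow> complex mat \<Rightarrow> (nat \<Rightarrow> real) \<Rightarrow> (real \<Rightarrow> real) \<Rightarrow> complex mat \<Rightarrow> complex mat \<Rightarrow> real" where
  "exp_util n W \<epsilon> u \<rho> U =
     (\<Sum>i<n. \<Sum>j<n. \<Sum>k<n.
        Re (melem W \<rho> i j * melem W (adj U) j k * melem W U k i) *
        u ((\<epsilon> i + \<epsilon> j) / 2 - \<epsilon> k))"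

definition opt_util ::
  "nat \<Rightarrow> complex mat \<Rightarrow> (nat \<Rightarrow> real) \<Rightarrow> (real \<Rightarrow> real) \<Rightarrow> complex mat \<Rightarrow> real" where
  "opt_util n W \<epsilon> u \<rho> = Sup {exp_util n W \<epsilon> u \<rho> U | U. unitary n U}"

definition daemonic_util ::
  "nat \<Rightarrow> nat \<Rightarrow> complex mat \<Rightarrow> (nat \<Rightarrow> real) \<Rightarrow> (real \<Rightarrow> real) \<Rightarrow> complex mat \<Rightarrow> complex mat \<Rightarrow> real" where
  "daemonic_util dS dA W \<epsilon> u B \<rho> =
     (\<Sum>a\<in>{a. a < dA \<and> prob_a dS dA B \<rho> a > 0}.
        prob_a dS dA B \<rho> a * opt_util dS W \<epsilon> u (cond_state dS dA B \<rho> a))"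

definition ergotropy :: "nat \<Rightarrow> complex mat \<Rightarrow> complex mat \<Rightarrow> real" where
  "ergotropy n K X = Sup {Re (mtrace (K * X)) - Re (mtrace (K * V * X * adj V)) | V. unitary n V}"

end

theory Submission
  imports Defs
begin

text \<open>
  For the exponential utility the weight of a work value factorises,
  u((\<epsilon>_i + \<epsilon>_j)/2 - \<epsilon>_k) = 1/r - e^(-r \<epsilon>_i/2) e^(-r \<epsilon>_j/2) e^(r \<epsilon>_k)/r,
  so with E = e^(-r H_S/2) and H = \<Sum>_k y_k |\<epsilon>_k\<rangle>\<langle>\<epsilon>_k| the expected utility of \<rho> under U is
  Tr \<rho>/r - Tr[H U (E \<rho> E) U^\<dagger>]. Minimising Tr[K V X V^\<dagger>] over unitaries V is a rearrangement
  problem for the doubly stochastic matrix of squared overlaps of the two eigenbases; the minimum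
  \<Sum>_k y_k u_k pairs the increasing eigenvalues y_k of K with the decreasing eigenvalues u_k of X.
  Hence the optimal utility of \<rho> is Tr \<rho>/r minus this passive value for X = E \<rho> E, and the
  ergotropy of X is Tr[K X] minus the same passive value.

  Averaging over the outcomes a, \<Sum>_a p_a Tr \<rho>_S|a = Tr \<rho>_S, and
  \<Sum>_a p_a Tr[H~ E \<rho>_S|a E] = Tr[H~ E \<rho>_S E] = \<Sum>_k y_k u_k because H~ is diagonal in the eigenbasis
  of E \<rho>_S E. Subtracting, the daemonic gain is \<Sum>_a p_a times the ergotropy of E \<rho>_S|a E, a sum of
  nonnegative terms. Outcomes with p_a = 0 drop out because their unnormalised branch is a positive
  semidefinite matrix of trace zero, hence zero.
\<close>

section \<open>Rearrangement inequality\<close>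

lemma sum_mult_antitone_nonneg:
  fixes d w :: "nat \<Rightarrow> real"
  assumes "\<And>m. m \<le> n \<Longrightarrow> 0 \<le> (\<Sum>j<m. d j)"
    and "\<And>i j. i \<le> j \<Longrightarrow> j < n \<Longrightarrow> w j \<le> w i"
    and "0 < n \<Longrightarrow> 0 \<le> w (n - 1)"
  shows "0 \<le> (\<Sum>j<n. d j * w j)"
  using assms
proof (induction n arbitrary: w)
  case 0
  then show ?case by simp
next
  case (Suc n)
  have "0 \<le> (\<Sum>j<n. d j * (w j - w n))"
  proof (rule Suc.IH)
    show "\<And>m. m \<le> n \<Longrightarrow> 0 \<le> (\<Sum>j<m. d j)" using Suc.prems(1) by simp
    show "\<And>i j. i \<le> j \<Longrightarrow> j < n \<Longrightarrow> w j - w n \<le> w i - w n" using Suc.prems(2) by simp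
    show "0 < n \<Longrightarrow> 0 \<le> w (n - 1) - w n" using Suc.prems(2)[of "n - 1" n] by simp
  qed
  moreover have "0 \<le> w n * (\<Sum>j<Suc n. d j)" using Suc.prems(1)[of "Suc n"] Suc.prems(3) by simp
  moreover have "(\<Sum>j<Suc n. d j * w j) = (\<Sum>j<n. d j * (w j - w n)) + w n * (\<Sum>j<Suc n. d j)"
    by (simp add: algebra_simps sum_distrib_left sum_subtractf)
  ultimately show ?case by simp
qed

lemma sum_lessThan_le_weighted_sum:
  fixes y s :: "nat \<Rightarrow> real"
  assumes "m \<le> n"
    and y: "\<And>i j. i \<le> j \<Longrightarrow> j < n \<Longrightarrow> y i \<le> y j"
    and s: "\<And>k. k < n \<Longrightarrow> 0 \<le> s k" "\<And>k. k < n \<Longrightarrow> s k \<le> 1"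
    and sum_s: "(\<Sum>k<n. s k) = real m"
  shows "(\<Sum>k<m. y k) \<le> (\<Sum>k<n. y k * s k)"
proof -
  define \<chi> where "\<chi> k = (if k < m then 1 else 0 :: real)" for k
  have sum_\<chi>: "(\<Sum>k<n. f k * \<chi> k) = (\<Sum>k<m. f k)" for f :: "nat \<Rightarrow> real"
  proof -
    have "(\<Sum>k<n. f k * \<chi> k) = (\<Sum>k\<in>{..<n} \<inter> {..<m}. f k)"
      by (simp add: \<chi>_def sum.inter_restrict if_distrib lessThan_def cong: if_cong)
    also have "{..<n} \<inter> {..<m} = {..<m}" using \<open>m \<le> n\<close> by auto
    finally show ?thesis .
  qed
  \<comment> \<open>every term of the difference dominates the same multiple of \<open>y (m - 1)\<close>,
    and those multiples cancel\<close>
  have "(\<Sum>k<n. y (m - 1) * (s k - \<chi> k)) \<le> (\<Sum>k<n. y k * (s k - \<chi> k))"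
  proof (rule sum_mono)
    fix k assume k: "k \<in> {..<n}"
    show "y (m - 1) * (s k - \<chi> k) \<le> y k * (s k - \<chi> k)"
    proof (cases "k < m")
      case True
      then have "y k \<le> y (m - 1)" "s k - \<chi> k \<le> 0" using y[of k "m - 1"] s(2)[of k] k \<open>m \<le> n\<close>
        by (auto simp: \<chi>_def)
      then show ?thesis by (simp add: mult_right_mono_neg)
    next
      case False
      then have "y (m - 1) \<le> y k" "0 \<le> s k - \<chi> k" using y[of "m - 1" k] s(1)[of k] k
        by (auto simp: \<chi>_def)
      then show ?thesis by (simp add: mult_right_mono)
    qed
  qed
  moreover have "(\<Sum>k<n. y (m - 1) * (s k - \<chi> k)) = 0"
    using sum_\<chi>[of "\<lambda>_. 1"] by (simp add: sum_s sum_subtractf right_diff_distrib sum_distrib_left[symmetric])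
  ultimately show ?thesis
    using sum_\<chi>[of y] by (simp add: right_diff_distrib sum_subtractf)
qed

lemma doubly_stochastic_rearrangement:
  fixes D :: "nat \<Rightarrow> nat \<Rightarrow> real" and y w :: "nat \<Rightarrow> real"
  assumes D_nonneg: "\<And>k j. k < n \<Longrightarrow> j < n \<Longrightarrow> 0 \<le> D k j"
    and D_rows: "\<And>k. k < n \<Longrightarrow> (\<Sum>j<n. D k j) = 1"
    and D_cols: "\<And>j. j < n \<Longrightarrow> (\<Sum>k<n. D k j) = 1"
    and y: "\<And>i j. i \<le> j \<Longrightarrow> j < n \<Longrightarrow> y i \<le> y j"
    and w: "\<And>i j. i \<le> j \<Longrightarrow> j < n \<Longrightarrow> w j \<le> w i"
  shows "(\<Sum>k<n. y k * w k) \<le> (\<Sum>k<n. \<Sum>j<n. y k * D k j * w j)"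
proof -
  define d where "d j = (\<Sum>k<n. y k * D k j) - y j" for j
  have partial_sums: "0 \<le> (\<Sum>j<m. d j)" if "m \<le> n" for m
  proof -
    have "(\<Sum>k<m. y k) \<le> (\<Sum>k<n. y k * (\<Sum>j<m. D k j))"
    proof (rule sum_lessThan_le_weighted_sum[OF that y])
      show "0 \<le> (\<Sum>j<m. D k j)" if "k < n" for k
        using D_nonneg that \<open>m \<le> n\<close> by (auto intro: sum_nonneg)
      show "(\<Sum>j<m. D k j) \<le> 1" if "k < n" for k
        using sum_mono2[of "{..<n}" "{..<m}" "D k"] D_nonneg D_rows that \<open>m \<le> n\<close> by force
      show "(\<Sum>k<n. \<Sum>j<m. D k j) = real m"
        using D_cols \<open>m \<le> n\<close> by (subst sum.swap) simp
    qed
    also have "\<dots> = (\<Sum>j<m. \<Sum>k<n. y k * D k j)"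
      by (simp add: sum_distrib_left) (rule sum.swap)
    finally show ?thesis
      by (simp add: d_def sum_subtractf)
  qed
  have "(\<Sum>j<n. \<Sum>k<n. y k * D k j) = (\<Sum>k<n. y k * (\<Sum>j<n. D k j))"
    by (simp add: sum_distrib_left) (rule sum.swap)
  then have total: "(\<Sum>j<n. d j) = 0"
    using D_rows by (simp add: d_def sum_subtractf)
  \<comment> \<open>summation by parts against the decreasing \<open>w\<close>\<close>
  have "0 \<le> (\<Sum>j<n. d j * (w j - w (n - 1)))"
    by (rule sum_mult_antitone_nonneg) (use partial_sums w in auto)
  also have "\<dots> = (\<Sum>j<n. d j * w j)"
    using total by (simp add: right_diff_distrib sum_subtractf sum_distrib_right[symmetric])
  also have "\<dots> = (\<Sum>j<n. \<Sum>k<n. y k * D k j * w j) - (\<Sum>k<n. y k * w k)"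
    by (simp add: d_def left_diff_distrib sum_subtractf sum_distrib_right)
  also have "(\<Sum>j<n. \<Sum>k<n. y k * D k j * w j) = (\<Sum>k<n. \<Sum>j<n. y k * D k j * w j)"
    by (rule sum.swap)
  finally show ?thesis by simp
qed

abbreviation real_diag :: "nat \<Rightarrow> (nat \<Rightarrow> real) \<Rightarrow> complex mat" where
  "real_diag n f \<equiv> diagm n (\<lambda>k. complex_of_real (f k))"

abbreviation spectral_mat :: "nat \<Rightarrow> complex mat \<Rightarrow> (nat \<Rightarrow> real) \<Rightarrow> complex mat" where
  "spectral_mat n U f \<equiv> U * real_diag n f * adj U"

lemma adj_dim [simp]: "dim_row (adj A) = dim_col A" "dim_col (adj A) = dim_row A"
  unfolding adj_def by simp_all

lemma adj_carrier_mat [simp]: "A \<in> carrier_mat n m \<Longrightarrow> adj A \<in> carrier_mat m n"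
  unfolding carrier_mat_def by simp

lemma index_adj [simp]: "i < dim_col A \<Longrightarrow> j < dim_row A \<Longrightarrow> adj A $$ (i,j) = cnj (A $$ (j,i))"
  unfolding adj_def by simp

lemma adj_adj [simp]: "adj (adj A) = A"
  by (rule eq_matI) simp_all

lemma adj_one [simp]: "adj (1\<^sub>m n) = 1\<^sub>m n"
  by (rule eq_matI) simp_all

lemma adj_mult:
  assumes "A \<in> carrier_mat n m" "B \<in> carrier_mat m k"
  shows "adj (A * B) = adj B * adj A"
  by (rule eq_matI) (use assms in \<open>auto simp: scalar_prod_def mult.commute\<close>)

lemma mult_carrier_mat_square [simp]:
  "A \<in> carrier_mat n n \<Longrightarrow> B \<in> carrier_mat n n \<Longrightarrow> A * B \<in> carrier_mat n n"
  by simp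

lemma mtrace_mult:
  "A \<in> carrier_mat n m \<Longrightarrow> B \<in> carrier_mat m n \<Longrightarrow>
   mtrace (A * B) = (\<Sum>i<n. \<Sum>j<m. A $$ (i,j) * B $$ (j,i))"
  by (auto simp: mtrace_def scalar_prod_def atLeast0LessThan intro!: sum.cong)

lemma mtrace_mult_comm:
  assumes "A \<in> carrier_mat n m" "B \<in> carrier_mat m n"
  shows "mtrace (A * B) = mtrace (B * A)"
  using assms by (simp add: mtrace_mult sum.swap[of _ "{..<n}"] mult.commute)

lemma mtrace_smult: "A \<in> carrier_mat n n \<Longrightarrow> mtrace (c \<cdot>\<^sub>m A) = c * mtrace A"
  by (simp add: mtrace_def sum_distrib_left)

lemma triple_sum_mtrace:
  assumes "A \<in> carrier_mat n n" "B \<in> carrier_mat n n" "C \<in> carrier_mat n n"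
  shows "(\<Sum>i<n. \<Sum>j<n. \<Sum>k<n. A $$ (i,j) * B $$ (j,k) * C $$ (k,i)) = mtrace (A * (B * C))"
  using assms
  by (auto simp: mtrace_mult[of _ n n] scalar_prod_def atLeast0LessThan sum_distrib_left mult.assoc
      intro!: sum.cong)

lemma mtrace_mult_sandwich:
  assumes "H \<in> carrier_mat n n" "E \<in> carrier_mat n n" "X \<in> carrier_mat n n"
  shows "mtrace (H * (E * X * E)) = mtrace (E * H * E * X)"
  using assms mtrace_mult_comm[of "H * E * X" n n E] by (simp add: assoc_mult_mat[of _ n n _ n _ n])

lemma diagm_eq_mat_diag: "diagm n f = mat_diag n f"
  unfolding diagm_def mat_diag_def by (rule eq_matI) auto

lemma diagm_carrier_mat [simp]: "diagm n f \<in> carrier_mat n n"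
  by (simp add: diagm_def)

lemma index_mult_diagm:
  assumes "A \<in> carrier_mat n m" "i < n" "j < m"
  shows "(A * diagm m g) $$ (i,j) = A $$ (i,j) * g j"
  using assms by (simp add: diagm_eq_mat_diag mat_diag_mult_right)

lemma index_diagm_mult_diagm:
  assumes "A \<in> carrier_mat n m" "i < n" "j < m"
  shows "(diagm n f * A * diagm m g) $$ (i,j) = f i * A $$ (i,j) * g j"
  using assms mat_diag_mult_right[of "mat n m (\<lambda>(i,j). f i * A $$ (i,j))" n m g]
  by (simp add: diagm_eq_mat_diag mat_diag_mult_left)

lemma unitaryD:
  assumes "unitary n U"
  shows "U \<in> carrier_mat n n" "adj U * U = 1\<^sub>m n" "U * adj U = 1\<^sub>m n"
  using assms by (auto simp: unitary_def)

lemma unitary_adj: "unitary n U \<Longrightarrow> unitary n (adj U)"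
  by (auto simp: unitary_def)

lemma unitary_adj_mult_cancel: "unitary n U \<Longrightarrow> A \<in> carrier_mat n n \<Longrightarrow> adj U * (U * A) = A"
  by (simp add: unitary_def assoc_mult_mat[of "adj U" n n U n A n, symmetric])

lemma unitary_mult_adj_cancel: "unitary n U \<Longrightarrow> A \<in> carrier_mat n n \<Longrightarrow> U * (adj U * A) = A"
  by (simp add: unitary_def assoc_mult_mat[of U n n "adj U" n A n, symmetric])

lemma unitary_mult:
  assumes P: "unitary n P" and Q: "unitary n Q"
  shows "unitary n (P * Q)"
proof -
  note PQ = unitaryD[OF P] unitaryD[OF Q]
  have "adj (P * Q) * (P * Q) = 1\<^sub>m n"
    using PQ P by (simp add: adj_mult[of _ n n _ n] assoc_mult_mat[of _ n n _ n _ n] unitary_adj_mult_cancel)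
  moreover have "P * Q * adj (P * Q) = 1\<^sub>m n"
    using PQ Q by (simp add: adj_mult[of _ n n _ n] assoc_mult_mat[of _ n n _ n _ n] unitary_mult_adj_cancel)
  ultimately show ?thesis
    using PQ by (simp add: unitary_def)
qed

lemma unitary_rows_orthonormal:
  assumes "unitary n U" "i < n" "j < n"
  shows "(\<Sum>k<n. U $$ (i,k) * cnj (U $$ (j,k))) = (if i = j then 1 else 0)"
proof -
  have "(\<Sum>k<n. U $$ (i,k) * cnj (U $$ (j,k))) = (U * adj U) $$ (i,j)"
    using unitaryD(1)[OF assms(1)] assms(2,3) by (simp add: scalar_prod_def atLeast0LessThan)
  then show ?thesis
    using unitaryD(3)[OF assms(1)] assms(2,3) by simp
qed

lemma unitary_cols_orthonormal:
  assumes "unitary n U" "i < n" "j < n"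
  shows "(\<Sum>k<n. cnj (U $$ (k,i)) * U $$ (k,j)) = (if i = j then 1 else 0)"
  using unitary_rows_orthonormal[OF unitary_adj[OF assms(1)] assms(2,3)] unitaryD(1)[OF assms(1)] assms(2,3)
  by simp

lemma unitary_sum_norm_row:
  assumes "unitary n U" "k < n"
  shows "(\<Sum>j<n. (cmod (U $$ (k,j)))\<^sup>2) = 1"
proof -
  have "complex_of_real (\<Sum>j<n. (cmod (U $$ (k,j)))\<^sup>2) = (\<Sum>j<n. U $$ (k,j) * cnj (U $$ (k,j)))"
    by (simp only: of_real_sum complex_norm_square)
  also have "\<dots> = 1"
    using unitary_rows_orthonormal[OF assms(1) assms(2) assms(2)] by simp
  finally show ?thesis
    using of_real_eq_1_iff by blast
qed

lemma unitary_sum_norm_col: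
  assumes "unitary n U" "j < n"
  shows "(\<Sum>k<n. (cmod (U $$ (k,j)))\<^sup>2) = 1"
  using unitary_sum_norm_row[OF unitary_adj[OF assms(1)] assms(2)] unitaryD(1)[OF assms(1)] assms(2)
  by simp

lemma sum_norm_one_mat:
  "(\<Sum>k<n. \<Sum>j<n. y k * (cmod ((1\<^sub>m n :: complex mat) $$ (k,j)))\<^sup>2 * w j) = (\<Sum>k<n. y k * w k)"
proof -
  have "(\<Sum>k<n. \<Sum>j<n. y k * (cmod ((1\<^sub>m n :: complex mat) $$ (k,j)))\<^sup>2 * w j)
      = (\<Sum>k<n. \<Sum>j<n. if k = j then y k * w k else 0)"
    by (intro sum.cong) auto
  then show ?thesis
    by simp
qed

section \<open>Traces over unitary orbits and ergotropy\<close>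

lemma trace_diag_conj:
  assumes T: "T \<in> carrier_mat n n"
  shows "Re (mtrace (real_diag n y * T * real_diag n w * adj T))
       = (\<Sum>k<n. \<Sum>j<n. y k * (cmod (T $$ (k,j)))\<^sup>2 * w j)"
proof -
  have "mtrace (real_diag n y * T * real_diag n w * adj T)
      = (\<Sum>k<n. \<Sum>j<n. complex_of_real (y k) * (T $$ (k,j) * cnj (T $$ (k,j))) * complex_of_real (w j))"
    using T by (simp add: mtrace_mult[of _ n n] index_diagm_mult_diagm mult_ac)
  also have "\<dots> = complex_of_real (\<Sum>k<n. \<Sum>j<n. y k * (cmod (T $$ (k,j)))\<^sup>2 * w j)"
    by (simp only: of_real_sum of_real_mult complex_norm_square)
  finally show ?thesis
    by simp
qed

lemma mtrace_unitary_conj: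
  assumes "unitary n P" "M \<in> carrier_mat n n"
  shows "mtrace (P * M * adj P) = mtrace M"
  using assms mtrace_mult_comm[of "P * M" n n "adj P"]
  by (simp add: unitaryD unitary_adj_mult_cancel)

lemma trace_spectral_conj:
  assumes P: "unitary n P" and Q: "unitary n Q" and V: "unitary n V"
  shows "Re (mtrace (spectral_mat n P y * V * spectral_mat n Q w * adj V))
       = (\<Sum>k<n. \<Sum>j<n. y k * (cmod ((adj P * V * Q) $$ (k,j)))\<^sup>2 * w j)"
proof -
  define T where "T = adj P * V * Q"
  note carriers = unitaryD(1)[OF P] unitaryD(1)[OF Q] unitaryD(1)[OF V]
  have T_carrier: "T \<in> carrier_mat n n"
    unfolding T_def using carriers by simp
  have "spectral_mat n P y * V * spectral_mat n Q w * adj V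
      = P * (real_diag n y * T * real_diag n w * adj T) * adj P"
    unfolding T_def using carriers unitaryD(3)[OF P]
    by (simp add: adj_mult[of _ n n _ n] assoc_mult_mat[of _ n n _ n _ n])
  then show ?thesis
    using mtrace_unitary_conj[OF P] trace_diag_conj[OF T_carrier] T_carrier
    by (simp add: T_def)
qed

lemma trace_spectral_mult:
  assumes P: "unitary n P" and Q: "unitary n Q"
  shows "Re (mtrace (spectral_mat n P y * spectral_mat n Q w))
       = (\<Sum>k<n. \<Sum>j<n. y k * (cmod ((adj P * Q) $$ (k,j)))\<^sup>2 * w j)"
  using trace_spectral_conj[OF P Q, of "1\<^sub>m n"] unitaryD(1)[OF P] unitaryD(1)[OF Q]
  by (simp add: unitary_def)

lemma trace_spectral_mult_same:
  assumes "unitary n P"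
  shows "Re (mtrace (spectral_mat n P y * spectral_mat n P w)) = (\<Sum>k<n. y k * w k)"
  using trace_spectral_mult[OF assms assms] unitaryD(2)[OF assms] sum_norm_one_mat
  by simp

lemma unitary_rearrangement:
  assumes "unitary n U"
    and "\<And>i j. i \<le> j \<Longrightarrow> j < n \<Longrightarrow> y i \<le> y j"
    and "\<And>i j. i \<le> j \<Longrightarrow> j < n \<Longrightarrow> w j \<le> w i"
  shows "(\<Sum>k<n. y k * w k) \<le> (\<Sum>k<n. \<Sum>j<n. y k * (cmod (U $$ (k,j)))\<^sup>2 * w j)"
  by (rule doubly_stochastic_rearrangement)
    (use assms unitary_sum_norm_row unitary_sum_norm_col in auto)

lemma Sup_minus_trace_unitary_conj:
  assumes P: "unitary n P" and Q: "unitary n Q"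
    and y: "\<And>i j. i \<le> j \<Longrightarrow> j < n \<Longrightarrow> y i \<le> y j"
    and w: "\<And>i j. i \<le> j \<Longrightarrow> j < n \<Longrightarrow> w j \<le> w i"
  shows "Sup {c - Re (mtrace (spectral_mat n P y * V * spectral_mat n Q w * adj V)) | V. unitary n V}
       = c - (\<Sum>k<n. y k * w k)"
proof (rule cSup_eq_maximum)
  have PQ: "unitary n (P * adj Q)"
    using P Q by (intro unitary_mult unitary_adj)
  have "adj P * (P * adj Q) * Q = 1\<^sub>m n"
    using P Q unitaryD[OF P] unitaryD[OF Q]
    by (simp add: assoc_mult_mat[of _ n n _ n _ n] unitary_adj_mult_cancel)
  then have "c - Re (mtrace (spectral_mat n P y * (P * adj Q) * spectral_mat n Q w * adj (P * adj Q)))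
      = c - (\<Sum>k<n. y k * w k)"
    using trace_spectral_conj[OF P Q PQ] sum_norm_one_mat by simp
  then show "c - (\<Sum>k<n. y k * w k)
      \<in> {c - Re (mtrace (spectral_mat n P y * V * spectral_mat n Q w * adj V)) | V. unitary n V}"
    using PQ by (metis (mono_tags, lifting) mem_Collect_eq)
next
  fix x
  assume "x \<in> {c - Re (mtrace (spectral_mat n P y * V * spectral_mat n Q w * adj V)) | V. unitary n V}"
  then obtain V where V: "unitary n V"
    and x: "x = c - Re (mtrace (spectral_mat n P y * V * spectral_mat n Q w * adj V))"
    by blast
  have "unitary n (adj P * V * Q)"
    using P Q V by (intro unitary_mult unitary_adj)
  then show "x \<le> c - (\<Sum>k<n. y k * w k)"
    unfolding x trace_spectral_conj[OF P Q V] using unitary_rearrangement y w by simp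
qed

lemma ergotropy_spectral:
  assumes "unitary n P" "unitary n Q"
    and "\<And>i j. i \<le> j \<Longrightarrow> j < n \<Longrightarrow> y i \<le> y j"
    and "\<And>i j. i \<le> j \<Longrightarrow> j < n \<Longrightarrow> w j \<le> w i"
  shows "ergotropy n (spectral_mat n P y) (spectral_mat n Q w)
       = Re (mtrace (spectral_mat n P y * spectral_mat n Q w)) - (\<Sum>k<n. y k * w k)"
  unfolding ergotropy_def by (rule Sup_minus_trace_unitary_conj[OF assms])

lemma ergotropy_spectral_eq_sum:
  assumes P: "unitary n P" and Q: "unitary n Q"
    and y: "\<And>i j. i \<le> j \<Longrightarrow> j < n \<Longrightarrow> y i \<le> y j"
    and w: "\<And>i j. i \<le> j \<Longrightarrow> j < n \<Longrightarrow> w j \<le> w i"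
  shows "ergotropy n (spectral_mat n P y) (spectral_mat n Q w)
       = (\<Sum>k<n. \<Sum>j<n. w j * ((cmod ((adj P * Q) $$ (k,j)))\<^sup>2 - (if j = k then 1 else 0)) * y k)"
proof -
  have "(\<Sum>k<n. \<Sum>j<n. w j * ((cmod ((adj P * Q) $$ (k,j)))\<^sup>2 - (if j = k then 1 else 0)) * y k)
      = (\<Sum>k<n. \<Sum>j<n. y k * (cmod ((adj P * Q) $$ (k,j)))\<^sup>2 * w j - (if j = k then y k * w k else 0))"
    by (intro sum.cong refl) (auto simp: algebra_simps)
  then show ?thesis
    by (simp add: ergotropy_spectral[OF assms] trace_spectral_mult[OF P Q] sum_subtractf)
qed

lemma ergotropy_spectral_nonneg:
  assumes P: "unitary n P" and Q: "unitary n Q"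
    and y: "\<And>i j. i \<le> j \<Longrightarrow> j < n \<Longrightarrow> y i \<le> y j"
    and w: "\<And>i j. i \<le> j \<Longrightarrow> j < n \<Longrightarrow> w j \<le> w i"
  shows "0 \<le> ergotropy n (spectral_mat n P y) (spectral_mat n Q w)"
proof -
  have "unitary n (adj P * Q)"
    using P Q by (intro unitary_mult unitary_adj)
  then show ?thesis
    using unitary_rearrangement y w
    by (simp add: ergotropy_spectral[OF assms] trace_spectral_mult[OF P Q])
qed

section \<open>Exponential utility\<close>

lemma exp_utility_split:
  fixes r a b c :: real
  assumes "r \<noteq> 0"
  shows "(1 - exp (- r * ((a + b) / 2 - c))) / r
       = 1 / r - exp (- r * a / 2) * exp (- r * b / 2) * (exp (r * c) / r)"
proof -
  have "exp (- r * ((a + b) / 2 - c)) = exp (- r * a / 2) * exp (- r * b / 2) * exp (r * c)"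
    by (simp add: exp_add[symmetric] field_simps)
  then show ?thesis
    using assms by (simp add: field_simps)
qed

lemma exp_util_exponential:
  fixes \<epsilon> :: "nat \<Rightarrow> real"
  assumes W: "unitary n W" and U: "unitary n U" and X: "X \<in> carrier_mat n n" and r: "r \<noteq> 0"
  defines "E \<equiv> spectral_mat n W (\<lambda>k. exp (- r * \<epsilon> k / 2))"
  shows "exp_util n W \<epsilon> (\<lambda>w. (1 - exp (- r * w)) / r) X U
       = Re (mtrace X) / r
         - Re (mtrace (spectral_mat n W (\<lambda>k. exp (r * \<epsilon> k) / r) * U * (E * X * E) * adj U))"
proof -
  define e where "e k = exp (- r * \<epsilon> k / 2)" for k
  define y where "y k = exp (r * \<epsilon> k) / r" for k
  define R where "R = adj W * X * W"
  define A where "A = adj W * adj U * W"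
  define B where "B = adj W * U * W"
  note carriers = unitaryD(1)[OF W] unitaryD(1)[OF U] X
  have RAB: "R \<in> carrier_mat n n" "A \<in> carrier_mat n n" "B \<in> carrier_mat n n"
    unfolding R_def A_def B_def using carriers by simp_all
  have Re_split: "Re z * (1 / r - t) = Re z / r - Re (complex_of_real t * z)" for z t
    by (simp add: algebra_simps)
  have "exp_util n W \<epsilon> (\<lambda>w. (1 - exp (- r * w)) / r) X U
      = (\<Sum>i<n. \<Sum>j<n. \<Sum>k<n. Re (R $$ (i,j) * A $$ (j,k) * B $$ (k,i)) / r
          - Re ((real_diag n e * R * real_diag n e) $$ (i,j) * (A * real_diag n y) $$ (j,k) * B $$ (k,i)))"
    unfolding exp_util_def melem_def R_def[symmetric] A_def[symmetric] B_def[symmetric]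
  proof (intro sum.cong refl)
    fix i j k assume "i \<in> {..<n}" "j \<in> {..<n}" "k \<in> {..<n}"
    then have entry: "(real_diag n e * R * real_diag n e) $$ (i,j) * (A * real_diag n y) $$ (j,k) * B $$ (k,i)
        = complex_of_real (e i * e j * y k) * (R $$ (i,j) * A $$ (j,k) * B $$ (k,i))"
      using RAB by (simp add: index_diagm_mult_diagm index_mult_diagm mult_ac)
    have split: "(1 - exp (- r * ((\<epsilon> i + \<epsilon> j) / 2 - \<epsilon> k))) / r = 1 / r - e i * e j * y k"
      unfolding exp_utility_split[OF r] e_def y_def by simp
    show "Re (R $$ (i,j) * A $$ (j,k) * B $$ (k,i)) * ((1 - exp (- r * ((\<epsilon> i + \<epsilon> j) / 2 - \<epsilon> k))) / r)
        = Re (R $$ (i,j) * A $$ (j,k) * B $$ (k,i)) / r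
          - Re ((real_diag n e * R * real_diag n e) $$ (i,j) * (A * real_diag n y) $$ (j,k) * B $$ (k,i))"
      unfolding entry split by (rule Re_split)
  qed
  also have "\<dots> = Re (mtrace (R * (A * B))) / r
      - Re (mtrace ((real_diag n e * R * real_diag n e) * ((A * real_diag n y) * B)))"
  proof -
    have "real_diag n e * R * real_diag n e \<in> carrier_mat n n" "A * real_diag n y \<in> carrier_mat n n"
      using RAB by simp_all
    then show ?thesis
      using RAB by (simp only: triple_sum_mtrace[symmetric] Re_sum sum_subtractf sum_divide_distrib)
  qed
  also have "R * (A * B) = adj W * X * W"
    unfolding R_def A_def B_def using carriers W U
    by (simp add: assoc_mult_mat[of _ n n _ n _ n] unitary_adj_mult_cancel unitary_mult_adj_cancel)
  also have "(real_diag n e * R * real_diag n e) * ((A * real_diag n y) * B)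
      = adj W * (E * X * E * adj U * spectral_mat n W y * U) * W"
    unfolding R_def A_def B_def E_def e_def[symmetric] using carriers W
    by (simp add: assoc_mult_mat[of _ n n _ n _ n] unitary_adj_mult_cancel)
  finally have "exp_util n W \<epsilon> (\<lambda>w. (1 - exp (- r * w)) / r) X U
      = Re (mtrace X) / r - Re (mtrace (E * X * E * adj U * spectral_mat n W y * U))"
    using mtrace_unitary_conj[OF unitary_adj[OF W]] carriers by (simp add: E_def)
  moreover have "mtrace (E * X * E * adj U * spectral_mat n W y * U)
      = mtrace (spectral_mat n W y * U * (E * X * E) * adj U)"
    using mtrace_mult_comm[of "E * X * E * adj U" n n "spectral_mat n W y * U"] carriers
    by (simp add: E_def assoc_mult_mat[of _ n n _ n _ n])
  ultimately show ?thesis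
    by (simp add: y_def)
qed

lemma exp_mult_divide_mono:
  fixes r a b :: real
  assumes "r \<noteq> 0" "a \<le> b"
  shows "exp (r * a) / r \<le> exp (r * b) / r"
proof (cases "0 < r")
  case True
  then show ?thesis
    using assms(2) by (simp add: divide_right_mono)
next
  case False
  then have "r < 0"
    using assms(1) by simp
  then show ?thesis
    using assms(2) by (simp add: divide_right_mono_neg mult_left_mono_neg)
qed

lemma opt_util_exponential:
  fixes \<epsilon> :: "nat \<Rightarrow> real"
  assumes W: "unitary n W" and X: "X \<in> carrier_mat n n" and r: "r \<noteq> 0"
    and \<epsilon>: "\<And>i j. i \<le> j \<Longrightarrow> j < n \<Longrightarrow> \<epsilon> i \<le> \<epsilon> j"
    and Q: "unitary n Q"
    and EXE: "spectral_mat n W (\<lambda>k. exp (- r * \<epsilon> k / 2)) * X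
        * spectral_mat n W (\<lambda>k. exp (- r * \<epsilon> k / 2))
        = spectral_mat n Q u"
    and u: "\<And>i j. i \<le> j \<Longrightarrow> j < n \<Longrightarrow> u j \<le> u i"
  shows "opt_util n W \<epsilon> (\<lambda>w. (1 - exp (- r * w)) / r) X
       = Re (mtrace X) / r - (\<Sum>k<n. exp (r * \<epsilon> k) / r * u k)"
proof -
  let ?y = "\<lambda>k. exp (r * \<epsilon> k) / r"
  have y: "?y i \<le> ?y j" if "i \<le> j" "j < n" for i j
    using exp_mult_divide_mono[OF r \<epsilon>[OF that]] .
  have "exp_util n W \<epsilon> (\<lambda>w. (1 - exp (- r * w)) / r) X U
      = Re (mtrace X) / r - Re (mtrace (spectral_mat n W ?y * U * spectral_mat n Q u * adj U))"
    if "unitary n U" for U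
    using exp_util_exponential[OF W that X r, of \<epsilon>] unfolding EXE .
  then have "opt_util n W \<epsilon> (\<lambda>w. (1 - exp (- r * w)) / r) X
      = Sup {Re (mtrace X) / r - Re (mtrace (spectral_mat n W ?y * U * spectral_mat n Q u * adj U))
          | U. unitary n U}"
    unfolding opt_util_def by (intro arg_cong[where f = Sup] Collect_cong ex_cong1) auto
  also have "\<dots> = Re (mtrace X) / r - (\<Sum>k<n. ?y k * u k)"
    by (rule Sup_minus_trace_unitary_conj[OF W Q y u])
  finally show ?thesis .
qed

lemma sesq_form_unit_vectors:
  fixes M :: "complex mat"
  assumes "i < n" "j < n"
  shows "(\<Sum>k<n. \<Sum>l<n. (if k = i then a else 0) * M $$ (k,l) * (if l = j then b else 0)) = a * M $$ (i,j) * b"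
proof -
  have "(if P then a else 0) * z = (if P then a * z else 0)"
    and "z * (if P then b else 0) = (if P then z * b else 0)" for P and a b z :: complex
    by simp_all
  then show ?thesis
    using assms by (simp cong: if_cong)
qed

lemma sesq_form_pair:
  fixes M :: "complex mat" and s t :: complex
  assumes i: "i < n" and j: "j < n" and "i \<noteq> j"
  defines "v \<equiv> \<lambda>l. if l = i then s else if l = j then t else 0"
  shows "(\<Sum>k<n. \<Sum>l<n. cnj (v k) * M $$ (k,l) * v l)
       = cnj s * M $$ (i,i) * s + cnj s * M $$ (i,j) * t + cnj t * M $$ (j,i) * s + cnj t * M $$ (j,j) * t"
proof -
  have v: "v l = (if l = i then s else 0) + (if l = j then t else 0)" for l
    using \<open>i \<noteq> j\<close> by (simp add: v_def)
  have cnj_v: "cnj (v k) = (if k = i then cnj s else 0) + (if k = j then cnj t else 0)" for k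
    using \<open>i \<noteq> j\<close> by (simp add: v_def)
  show ?thesis
    unfolding cnj_v unfolding v distrib_left distrib_right sum.distrib
      sesq_form_unit_vectors[OF i i] sesq_form_unit_vectors[OF i j]
      sesq_form_unit_vectors[OF j i] sesq_form_unit_vectors[OF j j]
    by (simp add: add_ac)
qed

lemma psd_trace_nonpos_eq_zero:
  assumes M: "psd n M" and tr: "Re (mtrace M) \<le> 0"
  shows "M = 0\<^sub>m n n"
proof -
  have carrier: "M \<in> carrier_mat n n" and form: "\<And>v. 0 \<le> Re (\<Sum>k<n. \<Sum>l<n. cnj (v k) * M $$ (k,l) * v l)"
    using M by (auto simp: psd_def)
  have herm: "cnj (M $$ (i,j)) = M $$ (j,i)" if "i < n" "j < n" for i j
    using M that by (metis carrier carrier_matD(1,2) index_adj psd_def complex_cnj_cnj)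
  have diag_nonneg: "0 \<le> Re (M $$ (k,k))" if "k < n" for k
    using form[of "\<lambda>l. if l = k then 1 else 0"] sesq_form_unit_vectors[OF that that]
    by (simp add: if_distrib[of cnj] cong: if_cong)
  have diag: "M $$ (k,k) = 0" if "k < n" for k
  proof -
    have "(\<Sum>k<n. Re (M $$ (k,k))) = 0"
      using tr diag_nonneg sum_nonneg[of "{..<n}" "\<lambda>k. Re (M $$ (k,k))"] carrier
      by (simp add: mtrace_def)
    then have "Re (M $$ (k,k)) = 0"
      using sum_nonneg_eq_0_iff[of "{..<n}" "\<lambda>k. Re (M $$ (k,k))"] diag_nonneg that by simp
    moreover have "Im (M $$ (k,k)) = 0"
      using herm[OF that that] by (simp add: complex_eq_iff)
    ultimately show ?thesis
      by (simp add: complex_eq_iff)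
  qed
  have off_diag: "M $$ (i,j) = 0" if "i < n" "j < n" "i \<noteq> j" for i j
  proof -
    define t where "t = - cnj (M $$ (i,j))"
    define v where "v = (\<lambda>l. if l = i then 1 else if l = j then t else 0)"
    have "(\<Sum>k<n. \<Sum>l<n. cnj (v k) * M $$ (k,l) * v l)
        = cnj 1 * M $$ (i,i) * 1 + cnj 1 * M $$ (i,j) * t + cnj t * M $$ (j,i) * 1 + cnj t * M $$ (j,j) * t"
      unfolding v_def by (rule sesq_form_pair[OF that])
    also have "\<dots> = - 2 * (M $$ (i,j) * cnj (M $$ (i,j)))"
      using diag that herm[of i j, symmetric] by (simp add: t_def)
    also have "\<dots> = - 2 * complex_of_real ((cmod (M $$ (i,j)))\<^sup>2)"
      by (simp only: complex_norm_square)
    finally have "0 \<le> - 2 * (cmod (M $$ (i,j)))\<^sup>2"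
      using form[of v] by simp
    then show ?thesis
      by simp
  qed
  show ?thesis
    by (rule eq_matI) (use carrier diag off_diag in auto)
qed

section \<open>Measuring the ancilla\<close>

lemma sum_lessThan_mult: "(\<Sum>s<m*k. f s) = (\<Sum>i<m. \<Sum>b<k. f (i*k+b))" for m k :: nat
proof -
  have "(\<Sum>s<m*k. f s) = (\<Sum>i<m. sum f {i*k..<i*k+k})"
    by (rule sum.nat_group[symmetric])
  also have "\<dots> = (\<Sum>i<m. \<Sum>b<k. f (i*k+b))"
    by (simp add: sum.atLeastLessThan_shift_0[of f] atLeast0LessThan add.commute)
  finally show ?thesis .
qed

lemma pair_index_less: "i < m \<Longrightarrow> b < (k::nat) \<Longrightarrow> i*k+b < m*k"
  using mult_le_mono1[of "Suc i" m k] by simp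

lemma proj_A_carrier_mat [simp]: "proj_A dS dA B a \<in> carrier_mat (dS*dA) (dS*dA)"
  by (simp add: proj_A_def)

lemma proj_A_dim [simp]: "dim_row (proj_A dS dA B a) = dS*dA" "dim_col (proj_A dS dA B a) = dS*dA"
  by (simp_all add: proj_A_def)

lemma index_proj_A:
  assumes "i < dS" "b < dA" "i' < dS" "b' < dA"
  shows "proj_A dS dA B a $$ (i*dA+b, i'*dA+b') = (if i = i' then B $$ (b,a) * cnj (B $$ (b',a)) else 0)"
  using assms pair_index_less[of i dS b dA] pair_index_less[of i' dS b' dA] by (simp add: proj_A_def)

lemma index_proj_A_mult:
  assumes Y: "Y \<in> carrier_mat (dS*dA) (dS*dA)" and i: "i < dS" and b: "b < dA" and q: "q < dS*dA"
  shows "(proj_A dS dA B a * Y) $$ (i*dA+b, q) = B $$ (b,a) * (\<Sum>b1<dA. cnj (B $$ (b1,a)) * Y $$ (i*dA+b1, q))"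
proof -
  have "(proj_A dS dA B a * Y) $$ (i*dA+b, q)
      = (\<Sum>i1<dS. \<Sum>b1<dA. proj_A dS dA B a $$ (i*dA+b, i1*dA+b1) * Y $$ (i1*dA+b1, q))"
    using Y q pair_index_less[OF i b]
    by (simp add: scalar_prod_def atLeast0LessThan) (rule sum_lessThan_mult)
  also have "\<dots> = (\<Sum>b1<dA. B $$ (b,a) * cnj (B $$ (b1,a)) * Y $$ (i*dA+b1, q))"
    using i b by (subst sum.swap) (simp add: index_proj_A if_distrib[of "\<lambda>x. x * _"] cong: if_cong)
  finally show ?thesis
    by (simp add: sum_distrib_left mult.assoc)
qed

lemma index_mult_proj_A:
  assumes Y: "Y \<in> carrier_mat (dS*dA) (dS*dA)" and j: "j < dS" and b: "b < dA" and p: "p < dS*dA"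
  shows "(Y * proj_A dS dA B a) $$ (p, j*dA+b) = (\<Sum>b2<dA. Y $$ (p, j*dA+b2) * B $$ (b2,a)) * cnj (B $$ (b,a))"
proof -
  have "(Y * proj_A dS dA B a) $$ (p, j*dA+b)
      = (\<Sum>j1<dS. \<Sum>b2<dA. Y $$ (p, j1*dA+b2) * proj_A dS dA B a $$ (j1*dA+b2, j*dA+b))"
    using Y p pair_index_less[OF j b]
    by (simp add: scalar_prod_def atLeast0LessThan) (rule sum_lessThan_mult)
  also have "\<dots> = (\<Sum>b2<dA. Y $$ (p, j*dA+b2) * (B $$ (b2,a) * cnj (B $$ (b,a))))"
    using j b by (subst sum.swap) (simp add: index_proj_A if_distrib[of "\<lambda>x. _ * x"] cong: if_cong)
  finally show ?thesis
    by (simp add: sum_distrib_right mult.assoc)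
qed

text \<open>\<open>(I \<otimes> \<langle>a|) \<rho> (I \<otimes> |a\<rangle>)\<close>, the unnormalised conditional state \<open>p\<^sub>a \<rho>\<^sub>S\<^sub>|\<^sub>a\<close>.\<close>
definition branch_op :: "nat \<Rightarrow> nat \<Rightarrow> complex mat \<Rightarrow> complex mat \<Rightarrow> nat \<Rightarrow> complex mat" where
  "branch_op dS dA B \<rho> a = mat dS dS (\<lambda>(i,j).
     \<Sum>b<dA. \<Sum>b'<dA. cnj (B $$ (b,a)) * \<rho> $$ (i*dA+b, j*dA+b') * B $$ (b',a))"

lemma branch_op_carrier_mat [simp]: "branch_op dS dA B \<rho> a \<in> carrier_mat dS dS"
  by (simp add: branch_op_def)

lemma ptrace_A_proj_A_conj:
  assumes B: "unitary dA B" and a: "a < dA" and \<rho>: "\<rho> \<in> carrier_mat (dS*dA) (dS*dA)"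
  shows "ptrace_A dS dA (proj_A dS dA B a * \<rho> * proj_A dS dA B a) = branch_op dS dA B \<rho> a"
proof (rule eq_matI)
  fix i j
  assume "i < dim_row (branch_op dS dA B \<rho> a)" "j < dim_col (branch_op dS dA B \<rho> a)"
  then have i: "i < dS" and j: "j < dS"
    by (simp_all add: branch_op_def)
  let ?P = "proj_A dS dA B a"
  have entry: "(?P * \<rho> * ?P) $$ (i*dA+b, j*dA+b) = cnj (B $$ (b,a)) * B $$ (b,a) * branch_op dS dA B \<rho> a $$ (i,j)"
    if b: "b < dA" for b
  proof -
    have P\<rho>: "?P * \<rho> \<in> carrier_mat (dS*dA) (dS*dA)"
      by (rule mult_carrier_mat[OF proj_A_carrier_mat \<rho>])
    have inner: "(\<Sum>b2<dA. (?P * \<rho>) $$ (i*dA+b, j*dA+b2) * B $$ (b2,a))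
        = (\<Sum>b2<dA. B $$ (b,a) * (\<Sum>b1<dA. cnj (B $$ (b1,a)) * \<rho> $$ (i*dA+b1, j*dA+b2)) * B $$ (b2,a))"
      by (intro sum.cong refl) (simp add: index_proj_A_mult[OF \<rho> i b pair_index_less[OF j]])
    have "(?P * \<rho> * ?P) $$ (i*dA+b, j*dA+b)
        = (\<Sum>b2<dA. (?P * \<rho>) $$ (i*dA+b, j*dA+b2) * B $$ (b2,a)) * cnj (B $$ (b,a))"
      by (rule index_mult_proj_A[OF P\<rho> j b pair_index_less[OF i b]])
    also have "\<dots> = cnj (B $$ (b,a)) * B $$ (b,a)
        * (\<Sum>b2<dA. \<Sum>b1<dA. cnj (B $$ (b1,a)) * \<rho> $$ (i*dA+b1, j*dA+b2) * B $$ (b2,a))"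
      unfolding inner by (simp add: sum_distrib_left sum_distrib_right mult_ac)
    also have "(\<Sum>b2<dA. \<Sum>b1<dA. cnj (B $$ (b1,a)) * \<rho> $$ (i*dA+b1, j*dA+b2) * B $$ (b2,a))
        = branch_op dS dA B \<rho> a $$ (i,j)"
      using i j unfolding branch_op_def by simp (rule sum.swap)
    finally show ?thesis .
  qed
  have "ptrace_A dS dA (?P * \<rho> * ?P) $$ (i,j)
      = (\<Sum>b<dA. cnj (B $$ (b,a)) * B $$ (b,a)) * branch_op dS dA B \<rho> a $$ (i,j)"
    using i j by (simp add: ptrace_A_def entry sum_distrib_right)
  then show "ptrace_A dS dA (?P * \<rho> * ?P) $$ (i,j) = branch_op dS dA B \<rho> a $$ (i,j)"
    using unitary_cols_orthonormal[OF B a a] by simp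
qed (simp_all add: ptrace_A_def branch_op_def)

lemma prob_a_eq_trace_branch_op:
  assumes \<rho>: "\<rho> \<in> carrier_mat (dS*dA) (dS*dA)"
  shows "prob_a dS dA B \<rho> a = Re (mtrace (branch_op dS dA B \<rho> a))"
proof -
  let ?P = "proj_A dS dA B a"
  have "mtrace (?P * \<rho>) = (\<Sum>i<dS. \<Sum>b<dA. (?P * \<rho>) $$ (i*dA+b, i*dA+b))"
    by (simp add: mtrace_def sum_lessThan_mult)
  also have "\<dots> = (\<Sum>i<dS. \<Sum>b<dA. B $$ (b,a) * (\<Sum>b1<dA. cnj (B $$ (b1,a)) * \<rho> $$ (i*dA+b1, i*dA+b)))"
    by (intro sum.cong refl) (simp add: index_proj_A_mult[OF \<rho> _ _ pair_index_less])
  also have "\<dots> = (\<Sum>i<dS. \<Sum>b<dA. \<Sum>b1<dA. cnj (B $$ (b1,a)) * \<rho> $$ (i*dA+b1, i*dA+b) * B $$ (b,a))"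
    by (simp add: sum_distrib_left mult_ac)
  also have "\<dots> = mtrace (branch_op dS dA B \<rho> a)"
    unfolding mtrace_def branch_op_def by (simp, rule sum.cong[OF refl], rule sum.swap)
  finally show ?thesis
    by (simp add: prob_a_def)
qed

lemma sum_branch_op:
  assumes B: "unitary dA B" and "i < dS" "j < dS"
  shows "(\<Sum>a<dA. branch_op dS dA B \<rho> a $$ (i,j)) = ptrace_A dS dA \<rho> $$ (i,j)"
proof -
  have "(\<Sum>a<dA. branch_op dS dA B \<rho> a $$ (i,j))
      = (\<Sum>a<dA. \<Sum>b<dA. \<Sum>b'<dA. cnj (B $$ (b,a)) * \<rho> $$ (i*dA+b, j*dA+b') * B $$ (b',a))"
    using assms(2,3) by (simp add: branch_op_def)
  also have "\<dots> = (\<Sum>b<dA. \<Sum>a<dA. \<Sum>b'<dA. cnj (B $$ (b,a)) * \<rho> $$ (i*dA+b, j*dA+b') * B $$ (b',a))"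
    by (rule sum.swap)
  also have "\<dots> = (\<Sum>b<dA. \<Sum>b'<dA. \<Sum>a<dA. cnj (B $$ (b,a)) * \<rho> $$ (i*dA+b, j*dA+b') * B $$ (b',a))"
    by (rule sum.cong[OF refl], rule sum.swap)
  also have "\<dots> = (\<Sum>b<dA. \<Sum>b'<dA. \<rho> $$ (i*dA+b, j*dA+b') * (\<Sum>a<dA. B $$ (b',a) * cnj (B $$ (b,a))))"
    by (simp add: sum_distrib_left mult_ac)
  also have "\<dots> = (\<Sum>b<dA. \<rho> $$ (i*dA+b, j*dA+b))"
    by (simp add: unitary_rows_orthonormal[OF B] if_distrib[of "\<lambda>x. _ * x"] cong: if_cong)
  finally show ?thesis
    using assms(2,3) by (simp add: ptrace_A_def)
qed

lemma psd_branch_op: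
  assumes "psd (dS*dA) \<rho>"
  shows "psd dS (branch_op dS dA B \<rho> a)"
proof -
  have \<rho>: "\<rho> \<in> carrier_mat (dS*dA) (dS*dA)" and adj_\<rho>: "adj \<rho> = \<rho>"
    and form: "\<And>w. 0 \<le> Re (\<Sum>p<dS*dA. \<Sum>q<dS*dA. cnj (w p) * \<rho> $$ (p,q) * w q)"
    using assms by (auto simp: psd_def)
  have herm: "cnj (\<rho> $$ (i*dA+b, j*dA+b')) = \<rho> $$ (j*dA+b', i*dA+b)"
    if "i < dS" "b < dA" "j < dS" "b' < dA" for i b j b'
    using arg_cong[OF adj_\<rho>, of "\<lambda>M. M $$ (j*dA+b', i*dA+b)"] \<rho>
      pair_index_less[OF that(1,2)] pair_index_less[OF that(3,4)]
    by simp
  have "adj (branch_op dS dA B \<rho> a) = branch_op dS dA B \<rho> a"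
  proof (rule eq_matI)
    fix i j
    assume "i < dim_row (branch_op dS dA B \<rho> a)" "j < dim_col (branch_op dS dA B \<rho> a)"
    then have i: "i < dS" and j: "j < dS"
      by (simp_all add: branch_op_def)
    have entry: "cnj (cnj (B $$ (b,a)) * \<rho> $$ (j*dA+b, i*dA+b') * B $$ (b',a))
        = cnj (B $$ (b',a)) * \<rho> $$ (i*dA+b', j*dA+b) * B $$ (b,a)" if "b < dA" "b' < dA" for b b'
      using herm[OF j that(1) i that(2)] by (simp add: mult_ac)
    have "adj (branch_op dS dA B \<rho> a) $$ (i,j) = cnj (branch_op dS dA B \<rho> a $$ (j,i))"
      using i j by (simp add: branch_op_def)
    also have "\<dots> = (\<Sum>b<dA. \<Sum>b'<dA. cnj (cnj (B $$ (b,a)) * \<rho> $$ (j*dA+b, i*dA+b') * B $$ (b',a)))"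
      using i j by (simp only: branch_op_def index_mat split cnj_sum)
    also have "\<dots> = (\<Sum>b<dA. \<Sum>b'<dA. cnj (B $$ (b',a)) * \<rho> $$ (i*dA+b', j*dA+b) * B $$ (b,a))"
      by (intro sum.cong refl) (rule entry; simp)
    also have "\<dots> = branch_op dS dA B \<rho> a $$ (i,j)"
      using i j unfolding branch_op_def by simp (rule sum.swap)
    finally show "adj (branch_op dS dA B \<rho> a) $$ (i,j) = branch_op dS dA B \<rho> a $$ (i,j)" .
  qed (simp_all add: branch_op_def)
  moreover have "0 \<le> Re (\<Sum>i<dS. \<Sum>j<dS. cnj (v i) * branch_op dS dA B \<rho> a $$ (i,j) * v j)" for v
  proof -
    \<comment> \<open>the form of \<open>branch_op\<close> at \<open>v\<close> is the form of \<open>\<rho>\<close> at \<open>v \<otimes> |a\<rangle>\<close>\<close>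
    define w where "w p = v (p div dA) * B $$ (p mod dA, a)" for p
    have "(\<Sum>p<dS*dA. \<Sum>q<dS*dA. cnj (w p) * \<rho> $$ (p,q) * w q)
        = (\<Sum>i<dS. \<Sum>b<dA. \<Sum>j<dS. \<Sum>b'<dA.
             cnj (v i) * (cnj (B $$ (b,a)) * \<rho> $$ (i*dA+b, j*dA+b') * B $$ (b',a)) * v j)"
      unfolding sum_lessThan_mult by (simp add: w_def mult_ac)
    also have "\<dots> = (\<Sum>i<dS. \<Sum>j<dS. \<Sum>b<dA. \<Sum>b'<dA.
             cnj (v i) * (cnj (B $$ (b,a)) * \<rho> $$ (i*dA+b, j*dA+b') * B $$ (b',a)) * v j)"
      by (rule sum.cong[OF refl], rule sum.swap)
    also have "\<dots> = (\<Sum>i<dS. \<Sum>j<dS. cnj (v i) * branch_op dS dA B \<rho> a $$ (i,j) * v j)"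
      by (simp add: branch_op_def sum_distrib_left sum_distrib_right)
    finally show ?thesis
      using form[of w] by simp
  qed
  ultimately show ?thesis
    by (simp add: psd_def)
qed

lemma branch_op_eq_zero:
  assumes "density (dS*dA) \<rho>" "\<not> 0 < prob_a dS dA B \<rho> a"
  shows "branch_op dS dA B \<rho> a = 0\<^sub>m dS dS"
proof (rule psd_trace_nonpos_eq_zero)
  show "psd dS (branch_op dS dA B \<rho> a)"
    using assms(1) psd_branch_op by (simp add: density_def)
  show "Re (mtrace (branch_op dS dA B \<rho> a)) \<le> 0"
    using assms prob_a_eq_trace_branch_op by (simp add: density_def psd_def)
qed

lemma cond_state_carrier_mat [simp]: "cond_state dS dA B \<rho> a \<in> carrier_mat dS dS"
  by (simp add: cond_state_def ptrace_A_def)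

lemma sum_prob_trace_cond_state:
  assumes B: "unitary dA B" and \<rho>: "density (dS*dA) \<rho>" and K: "K \<in> carrier_mat dS dS"
  shows "(\<Sum>a\<in>{a. a < dA \<and> 0 < prob_a dS dA B \<rho> a}.
            prob_a dS dA B \<rho> a * Re (mtrace (K * cond_state dS dA B \<rho> a)))
       = Re (mtrace (K * ptrace_A dS dA \<rho>))"
proof -
  let ?S = "{a. a < dA \<and> 0 < prob_a dS dA B \<rho> a}"
  have \<rho>_carrier: "\<rho> \<in> carrier_mat (dS*dA) (dS*dA)"
    using \<rho> by (simp add: density_def psd_def)
  have "prob_a dS dA B \<rho> a * Re (mtrace (K * cond_state dS dA B \<rho> a)) = Re (mtrace (K * branch_op dS dA B \<rho> a))"
    if "a \<in> ?S" for a
    using that K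
    by (simp add: cond_state_def ptrace_A_proj_A_conj[OF B _ \<rho>_carrier]
        mult_smult_distrib[OF K branch_op_carrier_mat] mtrace_smult[of _ dS])
  then have "(\<Sum>a\<in>?S. prob_a dS dA B \<rho> a * Re (mtrace (K * cond_state dS dA B \<rho> a)))
      = (\<Sum>a\<in>?S. Re (mtrace (K * branch_op dS dA B \<rho> a)))"
    by simp
  also have "\<dots> = (\<Sum>a<dA. Re (mtrace (K * branch_op dS dA B \<rho> a)))"
    using K branch_op_eq_zero[OF \<rho>] by (intro sum.mono_neutral_left) (auto simp: mtrace_def)
  also have "\<dots> = Re (\<Sum>i<dS. \<Sum>j<dS. K $$ (i,j) * (\<Sum>a<dA. branch_op dS dA B \<rho> a $$ (j,i)))"
    using K by (simp add: mtrace_mult[of _ dS dS] sum_distrib_left sum.swap[of _ "{..<dA}"])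
  also have "\<dots> = Re (mtrace (K * ptrace_A dS dA \<rho>))"
    using K by (simp add: sum_branch_op[OF B] mtrace_mult[of _ dS dS] ptrace_A_def)
  finally show ?thesis .
qed

lemma sum_prob_trace_sandwich_cond_state:
  assumes B: "unitary dA B" and \<rho>: "density (dS*dA) \<rho>"
    and H: "H \<in> carrier_mat dS dS" and E: "E \<in> carrier_mat dS dS"
  shows "(\<Sum>a\<in>{a. a < dA \<and> 0 < prob_a dS dA B \<rho> a}.
            prob_a dS dA B \<rho> a * Re (mtrace (H * (E * cond_state dS dA B \<rho> a * E))))
       = Re (mtrace (H * (E * ptrace_A dS dA \<rho> * E)))"
  using sum_prob_trace_cond_state[OF B \<rho>, of "E * H * E"] H E
  by (simp add: mtrace_mult_sandwich[OF H E] ptrace_A_def)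

lemma daemonic_util_exponential:
  fixes \<epsilon> :: "nat \<Rightarrow> real"
  assumes W: "unitary dS W" and r: "r \<noteq> 0"
    and \<epsilon>: "\<And>i j. i \<le> j \<Longrightarrow> j < dS \<Longrightarrow> \<epsilon> i \<le> \<epsilon> j"
    and \<rho>: "density (dS*dA) \<rho>" and B: "unitary dA B"
  defines "E \<equiv> spectral_mat dS W (\<lambda>k. exp (- r * \<epsilon> k / 2))"
    and "p \<equiv> prob_a dS dA B \<rho>"
  assumes Q: "\<And>a. a < dA \<Longrightarrow> 0 < p a \<Longrightarrow> unitary dS (Q a)"
    and EcE: "\<And>a. a < dA \<Longrightarrow> 0 < p a \<Longrightarrow>
      E * cond_state dS dA B \<rho> a * E = spectral_mat dS (Q a) (u a)"
    and u: "\<And>a i j. a < dA \<Longrightarrow> 0 < p a \<Longrightarrow> i \<le> j \<Longrightarrow> j < dS \<Longrightarrow> u a j \<le> u a i"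
  shows "daemonic_util dS dA W \<epsilon> (\<lambda>w. (1 - exp (- r * w)) / r) B \<rho>
       = Re (mtrace (ptrace_A dS dA \<rho>)) / r
         - (\<Sum>a\<in>{a. a < dA \<and> 0 < p a}. p a * (\<Sum>k<dS. exp (r * \<epsilon> k) / r * u a k))"
proof -
  let ?S = "{a. a < dA \<and> 0 < p a}"
  have "daemonic_util dS dA W \<epsilon> (\<lambda>w. (1 - exp (- r * w)) / r) B \<rho>
      = (\<Sum>a\<in>?S. p a * (Re (mtrace (cond_state dS dA B \<rho> a)) / r - (\<Sum>k<dS. exp (r * \<epsilon> k) / r * u a k)))"
    unfolding daemonic_util_def p_def[symmetric]
    using opt_util_exponential[OF W cond_state_carrier_mat r \<epsilon> Q EcE[unfolded E_def] u] by simp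
  also have "\<dots> = (\<Sum>a\<in>?S. p a * Re (mtrace (cond_state dS dA B \<rho> a))) / r
      - (\<Sum>a\<in>?S. p a * (\<Sum>k<dS. exp (r * \<epsilon> k) / r * u a k))"
    by (simp add: right_diff_distrib sum_subtractf sum_divide_distrib)
  also have "(\<Sum>a\<in>?S. p a * Re (mtrace (cond_state dS dA B \<rho> a))) = Re (mtrace (ptrace_A dS dA \<rho>))"
    using sum_prob_trace_cond_state[OF B \<rho> one_carrier_mat]
    by (simp add: p_def ptrace_A_def left_mult_one_mat[OF cond_state_carrier_mat])
  finally show ?thesis .
qed

theorem lemma1:
  fixes dS dA :: nat and W B :: "complex mat" and \<epsilon> :: "nat \<Rightarrow> real" and r :: real
    and \<rho> :: "complex mat" and Uu :: "complex mat" and uu :: "nat \<Rightarrow> real"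
    and Ua :: "nat \<Rightarrow> complex mat" and ua :: "nat \<Rightarrow> nat \<Rightarrow> real"
  assumes "0 < dS" and "0 < dA"
    and "unitary dS W"
    and "\<And>i j. i < j \<Longrightarrow> j < dS \<Longrightarrow> \<epsilon> i < \<epsilon> j"
    and "r \<noteq> 0"
    and "density (dS * dA) \<rho>"
    and "unitary dA B"
  defines "u \<equiv> (\<lambda>w. (1 - exp (- r * w)) / r)"
    and "E \<equiv> W * diagm dS (\<lambda>k. complex_of_real (exp (- r * \<epsilon> k / 2))) * adj W"
    and "\<rho>S \<equiv> ptrace_A dS dA \<rho>"
    and "p \<equiv> prob_a dS dA B \<rho>"
    and "y \<equiv> (\<lambda>k. exp (r * \<epsilon> k) / r)"
  assumes "unitary dS Uu"
    and "E * \<rho>S * E = Uu * diagm dS (\<lambda>k. complex_of_real (uu k)) * adj Uu"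
    and "\<And>i j. i \<le> j \<Longrightarrow> j < dS \<Longrightarrow> uu j \<le> uu i"
    and "\<And>a. a < dA \<Longrightarrow> p a > 0 \<Longrightarrow> unitary dS (Ua a)"
    and "\<And>a. a < dA \<Longrightarrow> p a > 0 \<Longrightarrow>
           E * cond_state dS dA B \<rho> a * E = Ua a * diagm dS (\<lambda>k. complex_of_real (ua a k)) * adj (Ua a)"
    and "\<And>a i j. a < dA \<Longrightarrow> p a > 0 \<Longrightarrow> i \<le> j \<Longrightarrow> j < dS \<Longrightarrow> ua a j \<le> ua a i"
  defines "Ht \<equiv> Uu * diagm dS (\<lambda>k. complex_of_real (y k)) * adj Uu"
    and "\<rho>t \<equiv> (\<lambda>a. E * cond_state dS dA B \<rho> a * E)"
  shows "daemonic_util dS dA W \<epsilon> u B \<rho> - opt_util dS W \<epsilon> u \<rho>S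
           = (\<Sum>a\<in>{a. a < dA \<and> p a > 0}. p a * ergotropy dS Ht (\<rho>t a))
       \<and> (\<Sum>a\<in>{a. a < dA \<and> p a > 0}. p a * ergotropy dS Ht (\<rho>t a)) \<ge> 0
       \<and> (\<forall>a<dA. p a > 0 \<longrightarrow>
            ergotropy dS Ht (\<rho>t a)
              = (\<Sum>k<dS. \<Sum>j<dS. ua a j *
                   ((cmod ((adj Uu * Ua a) $$ (k,j)))\<^sup>2 - (if j = k then 1 else 0)) * y k))"
proof -
  note W = assms(3) and \<epsilon>_strict = assms(4) and r = assms(5) and \<rho> = assms(6) and B = assms(7)
    and Uu = assms(13) and ERE = assms(14) and uu = assms(15)
    and Ua = assms(16) and EcE = assms(17) and ua = assms(18)
  have \<epsilon>: "\<epsilon> i \<le> \<epsilon> j" if "i \<le> j" "j < dS" for i j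
    using \<epsilon>_strict[of i j] that by (cases "i = j") auto
  have y: "y i \<le> y j" if "i \<le> j" "j < dS" for i j
    unfolding y_def by (rule exp_mult_divide_mono[OF r \<epsilon>[OF that]])
  have E: "E \<in> carrier_mat dS dS" and Ht: "Ht \<in> carrier_mat dS dS"
    using unitaryD(1)[OF W] unitaryD(1)[OF Uu] by (simp_all add: E_def Ht_def)
  let ?S = "{a. a < dA \<and> 0 < p a}"
  have opt: "opt_util dS W \<epsilon> u \<rho>S = Re (mtrace \<rho>S) / r - (\<Sum>k<dS. y k * uu k)"
    unfolding u_def y_def
    by (rule opt_util_exponential[OF W _ r \<epsilon> Uu _ uu])
      (use ERE in \<open>simp_all add: \<rho>S_def ptrace_A_def E_def\<close>)
  have daemonic: "daemonic_util dS dA W \<epsilon> u B \<rho>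
      = Re (mtrace \<rho>S) / r - (\<Sum>a\<in>?S. p a * (\<Sum>k<dS. y k * ua a k))"
    unfolding u_def y_def \<rho>S_def p_def
    by (rule daemonic_util_exponential[OF W r \<epsilon> \<rho> B])
      (use Ua EcE ua in \<open>simp_all add: E_def p_def\<close>)
  have ergotropy: "ergotropy dS Ht (\<rho>t a) = Re (mtrace (Ht * \<rho>t a)) - (\<Sum>k<dS. y k * ua a k)"
    "0 \<le> ergotropy dS Ht (\<rho>t a)"
    "ergotropy dS Ht (\<rho>t a) = (\<Sum>k<dS. \<Sum>j<dS. ua a j *
       ((cmod ((adj Uu * Ua a) $$ (k,j)))\<^sup>2 - (if j = k then 1 else 0)) * y k)"
    if "a < dA" "0 < p a" for a
    unfolding Ht_def \<rho>t_def EcE[OF that]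
    using ergotropy_spectral[OF Uu Ua[OF that] y] ergotropy_spectral_nonneg[OF Uu Ua[OF that] y]
      ergotropy_spectral_eq_sum[OF Uu Ua[OF that] y] ua[OF that]
    by simp_all
  have "(\<Sum>a\<in>?S. p a * Re (mtrace (Ht * \<rho>t a))) = Re (mtrace (Ht * (E * \<rho>S * E)))"
    unfolding \<rho>t_def p_def \<rho>S_def by (rule sum_prob_trace_sandwich_cond_state[OF B \<rho> Ht E])
  also have "\<dots> = (\<Sum>k<dS. y k * uu k)"
    unfolding ERE Ht_def by (rule trace_spectral_mult_same[OF Uu])
  finally have "(\<Sum>a\<in>?S. p a * ergotropy dS Ht (\<rho>t a))
      = (\<Sum>k<dS. y k * uu k) - (\<Sum>a\<in>?S. p a * (\<Sum>k<dS. y k * ua a k))"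
    by (simp add: ergotropy(1) right_diff_distrib sum_subtractf)
  moreover have "0 \<le> (\<Sum>a\<in>?S. p a * ergotropy dS Ht (\<rho>t a))"
    using ergotropy(2) by (auto intro: sum_nonneg)
  ultimately show ?thesis
    using opt daemonic ergotropy(3) by simp
qed

end
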